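(* Let $0<\gamma<\sqrt{2\log 2}$ and fix $k$. For any fixed $\kappa>0$ there exists $\rho>0$ such that $$\lim_{n\to\infty}\mathbb P\Big(\mu_\gamma\times\mu_\gamma\big(\{(u,v)\in V_N\times V_N: |u-v|<N^{1-\kappa}\}\big)>N^{-\rho}\Big)=0.$$
   Context: Let $k\ge1$ be an integer, $K=2^k$, $n\ge1$, $N=2^n$, $m=\lfloor n/k\rfloor$, and $V_N=\{0,1,\dots,N-1\}^2$; $|u-v|=\max(|u_1-v_1|,|u_2-v_2|)$. For $j\ge0$ let $\mathcal B_j$ be the set of boxes $x+\{0,\dots,2^j-1\}^2$ with $x\in\mathbb Z^2$, and $\mathcal B_j(z)$ those containing $z$. Let $\{b_{j,B}\}$ be independent centered Gaussians with $\mathrm{Var}(b_{j,B})=2^{-2j}$. Set $\psi_{j,z}=\sum_{B\in\mathcal B_{jk}(z)}\sqrt k\,b_{jk,B}$ and $\varphi_{N,z}=\sum_{j=0}^{m-1}\psi_{j,z}$. For $\gamma>0$, $\mu_\gamma$ is the random probability measure on $V_N$ with $\mu_\gamma(v)=e^{\gamma\varphi_{N,v}}/\sum_{w\in V_N}e^{\gamma\varphi_{N,w}}$. *)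

theory Defs
  imports "HOL-Probability.Probability"
begin

type_synonym pt = "int \<times> int"

definition supdist :: "pt \<Rightarrow> pt \<Rightarrow> int" where
  "supdist u v = max \<bar>fst u - fst v\<bar> \<bar>snd u - snd v\<bar>"

text \<open>The box x + {0,...,2^j-1}^2 (boxes in B_j are identified by their corner x).\<close>
definition box :: "nat \<Rightarrow> pt \<Rightarrow> pt set" where
  "box j x = {(fst x + a, snd x + c) | a c. 0 \<le> a \<and> a < 2^j \<and> 0 \<le> c \<and> c < 2^j}"

definition VN :: "nat \<Rightarrow> pt set" where
  "VN n = {0..<2^n} \<times> {0..<2^n}"

text \<open>b j x \<omega> is the Gaussian b_{j,B} for the box B = box j x.
  psi_{j,z} = sum over boxes B in B_{jk} containing z of sqrt k * b_{jk,B}.\<close>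
definition psi :: "nat \<Rightarrow> (nat \<Rightarrow> pt \<Rightarrow> 'a \<Rightarrow> real) \<Rightarrow> nat \<Rightarrow> pt \<Rightarrow> 'a \<Rightarrow> real" where
  "psi k b j z \<omega> = (\<Sum>x\<in>{x. z \<in> box (j*k) x}. sqrt (real k) * b (j*k) x \<omega>)"

definition phi :: "nat \<Rightarrow> nat \<Rightarrow> (nat \<Rightarrow> pt \<Rightarrow> 'a \<Rightarrow> real) \<Rightarrow> pt \<Rightarrow> 'a \<Rightarrow> real" where
  "phi k n b z \<omega> = (\<Sum>j<n div k. psi k b j z \<omega>)"

definition mu :: "nat \<Rightarrow> nat \<Rightarrow> real \<Rightarrow> (nat \<Rightarrow> pt \<Rightarrow> 'a \<Rightarrow> real) \<Rightarrow> 'a \<Rightarrow> pt \<Rightarrow> real" where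
  "mu k n \<gamma> b \<omega> v = exp (\<gamma> * phi k n b v \<omega>) / (\<Sum>w\<in>VN n. exp (\<gamma> * phi k n b w \<omega>))"

definition close_mass :: "nat \<Rightarrow> nat \<Rightarrow> real \<Rightarrow> real \<Rightarrow> (nat \<Rightarrow> pt \<Rightarrow> 'a \<Rightarrow> real) \<Rightarrow> 'a \<Rightarrow> real" where
  "close_mass k n \<gamma> \<kappa> b \<omega> =
     (\<Sum>p\<in>{(u,v). u \<in> VN n \<and> v \<in> VN n \<and> real_of_int (supdist u v) < (2 ^ n) powr (1 - \<kappa>)}.
        mu k n \<gamma> b \<omega> (fst p) * mu k n \<gamma> b \<omega> (snd p))"

text \<open>The Gaussian model: b is an independent family with b j x ~ N(0, 2^{-2j}).\<close>
definition gaussian_field :: "'a measure \<Rightarrow> (nat \<Rightarrow> pt \<Rightarrow> 'a \<Rightarrow> real) \<Rightarrow> bool" where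
  "gaussian_field M b \<longleftrightarrow> prob_space M \<and>
     prob_space.indep_vars M (\<lambda>_. borel) (\<lambda>(j, x). b j x) UNIV \<and>
     (\<forall>j x. distributed M lborel (b j x) (normal_density 0 ((1/2) ^ j)))"

end

theory Submission
  imports Defs "HOL-Real_Asymp.Real_Asymp"
begin

text \<open>Write \<open>N = 2^n\<close>, \<open>Z\<close> for the partition function \<open>\<Sum>\<^sub>w exp (\<gamma> \<phi>\<^sub>w)\<close> and \<open>S\<close> for the same sum over
  close pairs \<open>(u, v)\<close> of \<open>exp (\<gamma> \<phi>\<^sub>u) exp (\<gamma> \<phi>\<^sub>v)\<close>, so that the close mass is \<open>S / Z\<^sup>2\<close>. The field is a
  sum of independent Gaussians, hence \<open>E exp (\<gamma> \<phi>\<^sub>u + \<gamma> \<phi>\<^sub>v) = exp (\<gamma>\<^sup>2 k m + \<gamma>\<^sup>2 k C(u, v))\<close>, where \<open>C(u, v)\<close>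
  is at most the number of scales \<open>2^(jk)\<close> exceeding \<open>|u - v|\<close>. Summing over pairs at distance below
  \<open>N^(1-\<kappa>)\<close> gives \<open>E S \<le> N^(4 + A - \<kappa>(2 - A) + o(1))\<close> with \<open>A = \<gamma>\<^sup>2 / ln 2 < 2\<close>, and Markov's inequality
  controls \<open>S\<close>. For \<open>Z\<close>, keep only the first \<open>m\<^sub>1 = m - n/(kq)\<close> scales: by the second moment method the
  truncated partition function is at least half its mean \<open>N\<^sup>2 exp (\<gamma>\<^sup>2 k m\<^sub>1 / 2)\<close>, its relative variance
  being \<open>N^(-2/q + o(1))\<close>, while by a union bound the remaining scales contribute at least \<open>-\<tau> n\<close>
  at every point. With high probability this yields \<open>S / Z\<^sup>2 \<le> N^(-\<kappa>(2 - A)/8)\<close>.\<close>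

section \<open>Exponential moments of the Gaussian field\<close>

lemma normal_density_mult_exp:
  fixes \<sigma> c x :: real
  assumes "\<sigma> > 0"
  shows "normal_density 0 \<sigma> x * exp (c * x) = exp (c^2 * \<sigma>^2 / 2) * normal_density (c * \<sigma>^2) \<sigma> x"
proof -
  have "exp (- (x^2) / (2 * \<sigma>^2)) * exp (c * x) = exp (c^2 * \<sigma>^2 / 2) * exp (- ((x - c * \<sigma>^2)^2) / (2 * \<sigma>^2))"
    unfolding exp_add[symmetric] using assms by (simp add: field_simps power2_eq_square)
  then show ?thesis
    unfolding normal_density_def by (simp add: algebra_simps)
qed

lemma
  fixes X :: "'a \<Rightarrow> real"
  assumes X: "distributed M lborel X (normal_density 0 \<sigma>)" and \<sigma>: "\<sigma> > 0"
  shows integrable_exp_normal: "integrable M (\<lambda>\<omega>. exp (c * X \<omega>))"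
    and integral_exp_normal: "(\<integral>\<omega>. exp (c * X \<omega>) \<partial>M) = exp (c^2 * \<sigma>^2 / 2)"
proof -
  have "integrable lborel (\<lambda>x. normal_density 0 \<sigma> x * exp (c * x))"
    unfolding normal_density_mult_exp[OF \<sigma>] using \<sigma>
    by (intro integrable_mult_right integrable_normal_density)
  then show "integrable M (\<lambda>\<omega>. exp (c * X \<omega>))"
    using distributed_integrable[OF X, of "\<lambda>x. exp (c * x)"] by simp
  have "(\<integral>\<omega>. exp (c * X \<omega>) \<partial>M) = (\<integral>x. normal_density 0 \<sigma> x * exp (c * x) \<partial>lborel)"
    using distributed_integral[OF X, of "\<lambda>x. exp (c * x)"] by simp
  also have "\<dots> = exp (c^2 * \<sigma>^2 / 2)"
    unfolding normal_density_mult_exp[OF \<sigma>] using \<sigma> by simp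
  finally show "(\<integral>\<omega>. exp (c * X \<omega>) \<partial>M) = exp (c^2 * \<sigma>^2 / 2)" .
qed

lemma (in prob_space)
  fixes X :: "'i \<Rightarrow> 'a \<Rightarrow> real"
  assumes indep: "indep_vars (\<lambda>_. borel) X F" and F: "finite F"
    and normal: "\<And>i. i \<in> F \<Longrightarrow> distributed M lborel (X i) (normal_density 0 (\<sigma> i))"
    and \<sigma>: "\<And>i. i \<in> F \<Longrightarrow> \<sigma> i > 0"
  shows integrable_exp_indep_normal_sum: "integrable M (\<lambda>\<omega>. exp (\<Sum>i\<in>F. c i * X i \<omega>))"
    and integral_exp_indep_normal_sum:
      "(\<integral>\<omega>. exp (\<Sum>i\<in>F. c i * X i \<omega>) \<partial>M) = exp (\<Sum>i\<in>F. (c i)^2 * (\<sigma> i)^2 / 2)"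
proof -
  have indep_exp: "indep_vars (\<lambda>_. borel) (\<lambda>i \<omega>. exp (c i * X i \<omega>)) F"
    by (rule indep_vars_compose2[OF indep]) simp
  have integrable: "integrable M (\<lambda>\<omega>. exp (c i * X i \<omega>))" if "i \<in> F" for i
    using integrable_exp_normal[OF normal[OF that] \<sigma>[OF that]] .
  have product: "exp (\<Sum>i\<in>F. c i * X i \<omega>) = (\<Prod>i\<in>F. exp (c i * X i \<omega>))" for \<omega>
    using F by (simp add: exp_sum)
  show "integrable M (\<lambda>\<omega>. exp (\<Sum>i\<in>F. c i * X i \<omega>))"
    unfolding product by (rule indep_vars_integrable[OF F indep_exp integrable])
  have "(\<integral>\<omega>. exp (\<Sum>i\<in>F. c i * X i \<omega>) \<partial>M) = (\<Prod>i\<in>F. \<integral>\<omega>. exp (c i * X i \<omega>) \<partial>M)"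
    unfolding product by (rule indep_vars_lebesgue_integral[OF F indep_exp integrable])
  also have "\<dots> = (\<Prod>i\<in>F. exp ((c i)^2 * (\<sigma> i)^2 / 2))"
    using integral_exp_normal[OF normal \<sigma>] by (intro prod.cong) auto
  also have "\<dots> = exp (\<Sum>i\<in>F. (c i)^2 * (\<sigma> i)^2 / 2)"
    using F by (simp add: exp_sum)
  finally show "(\<integral>\<omega>. exp (\<Sum>i\<in>F. c i * X i \<omega>) \<partial>M) = exp (\<Sum>i\<in>F. (c i)^2 * (\<sigma> i)^2 / 2)" .
qed

lemma gaussian_field_prob_space: "gaussian_field M b \<Longrightarrow> prob_space M"
  unfolding gaussian_field_def by simp

lemma gaussian_field_measurable [measurable]: "gaussian_field M b \<Longrightarrow> b j x \<in> borel_measurable M"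
  unfolding gaussian_field_def
  by (metis distributed_measurable measurable_lborel1)

lemma
  assumes G: "gaussian_field M b" and F: "finite F"
  shows integrable_exp_gaussian_field_sum:
      "integrable M (\<lambda>\<omega>. exp (\<Sum>i\<in>F. c i * b (fst i) (snd i) \<omega>))"
    and integral_exp_gaussian_field_sum:
      "(\<integral>\<omega>. exp (\<Sum>i\<in>F. c i * b (fst i) (snd i) \<omega>) \<partial>M) = exp (\<Sum>i\<in>F. (c i)^2 / 4^fst i / 2)"
proof -
  interpret prob_space M
    using G by (rule gaussian_field_prob_space)
  have indep: "indep_vars (\<lambda>_. borel) (\<lambda>i. b (fst i) (snd i)) F"
    using G indep_vars_subset unfolding gaussian_field_def case_prod_beta by blast
  have normal: "distributed M lborel (b (fst i) (snd i)) (normal_density 0 ((1/2)^fst i))" for i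
    using G unfolding gaussian_field_def by blast
  have var: "((1/2::real)^j)^2 = 1 / 4^j" for j
    by (simp add: power_one_over power2_eq_square power_mult_distrib[symmetric])
  show "integrable M (\<lambda>\<omega>. exp (\<Sum>i\<in>F. c i * b (fst i) (snd i) \<omega>))"
    by (rule integrable_exp_indep_normal_sum[OF indep F normal]) simp
  show "(\<integral>\<omega>. exp (\<Sum>i\<in>F. c i * b (fst i) (snd i) \<omega>) \<partial>M) = exp (\<Sum>i\<in>F. (c i)^2 / 4^fst i / 2)"
    using integral_exp_indep_normal_sum[OF indep F normal] by (simp add: var)
qed

section \<open>Boxes and the field restricted to a set of scales\<close>

definition box_corners :: "nat \<Rightarrow> pt \<Rightarrow> pt set" where
  "box_corners L z = {x. z \<in> box L x}"

lemma mem_box_iff: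
  "z \<in> box L x \<longleftrightarrow> fst x \<le> fst z \<and> fst z < fst x + 2^L \<and> snd x \<le> snd z \<and> snd z < snd x + 2^L"
proof
  assume "z \<in> box L x"
  then show "fst x \<le> fst z \<and> fst z < fst x + 2^L \<and> snd x \<le> snd z \<and> snd z < snd x + 2^L"
    unfolding box_def by auto
next
  assume "fst x \<le> fst z \<and> fst z < fst x + 2^L \<and> snd x \<le> snd z \<and> snd z < snd x + 2^L"
  then show "z \<in> box L x"
    unfolding box_def by (intro CollectI exI[of _ "fst z - fst x"] exI[of _ "snd z - snd x"]) auto
qed

lemma box_corners_eq_image:
  "box_corners L z = (\<lambda>(a, c). (fst z - a, snd z - c)) ` ({0..<2^L} \<times> {0..<2^L})"
proof (rule set_eqI)
  fix x :: pt
  show "x \<in> box_corners L z \<longleftrightarrow> x \<in> (\<lambda>(a, c). (fst z - a, snd z - c)) ` ({0..<2^L} \<times> {0..<2^L})"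
  proof
    assume "x \<in> box_corners L z"
    then have "(fst z - fst x, snd z - snd x) \<in> {0..<2^L} \<times> {0..<2^L}"
      unfolding box_corners_def mem_box_iff by auto
    then show "x \<in> (\<lambda>(a, c). (fst z - a, snd z - c)) ` ({0..<2^L} \<times> {0..<2^L})"
      by (rule rev_image_eqI) simp
  qed (auto simp: box_corners_def mem_box_iff)
qed

lemma finite_box_corners [simp]: "finite (box_corners L z)"
  unfolding box_corners_eq_image by simp

lemma card_box_corners: "card (box_corners L z) = 4^L"
proof -
  have "inj_on (\<lambda>(a, c). (fst z - a, snd z - c)) ({0..<(2::int)^L} \<times> {0..<2^L})"
    by (auto simp: inj_on_def)
  then have "card (box_corners L z) = card ({0..<(2::int)^L} \<times> {0..<(2::int)^L})"
    unfolding box_corners_eq_image by (rule card_image)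
  also have "\<dots> = 2^L * 2^L"
    by (simp add: card_cartesian_product nat_power_eq)
  also have "\<dots> = 4^L"
    by (simp add: power_mult_distrib[symmetric])
  finally show ?thesis .
qed

lemma box_corners_disjoint: "2^L \<le> supdist u v \<Longrightarrow> box_corners L u \<inter> box_corners L v = {}"
  unfolding box_corners_def supdist_def mem_box_iff by auto

lemma psi_eq_sum_box_corners: "psi k b j z \<omega> = (\<Sum>x\<in>box_corners (j*k) z. sqrt k * b (j*k) x \<omega>)"
  unfolding psi_def box_corners_def ..

definition phi_scales :: "nat \<Rightarrow> (nat \<Rightarrow> pt \<Rightarrow> 'a \<Rightarrow> real) \<Rightarrow> nat set \<Rightarrow> pt \<Rightarrow> 'a \<Rightarrow> real" where
  "phi_scales k b J z \<omega> = (\<Sum>j\<in>J. psi k b j z \<omega>)"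

lemma phi_eq_phi_scales: "phi k n b z \<omega> = phi_scales k b {..<n div k} z \<omega>"
  unfolding phi_def phi_scales_def ..

lemma phi_scales_split:
  assumes "m\<^sub>1 \<le> m"
  shows "phi_scales k b {..<m} z \<omega> = phi_scales k b {..<m\<^sub>1} z \<omega> + phi_scales k b {m\<^sub>1..<m} z \<omega>"
proof -
  have "{..<m} = {..<m\<^sub>1} \<union> {m\<^sub>1..<m}"
    using assms by auto
  then show ?thesis
    unfolding phi_scales_def by (simp add: sum.union_disjoint ivl_disj_int)
qed

lemma phi_scales_measurable [measurable]:
  "gaussian_field M b \<Longrightarrow> phi_scales k b J z \<in> borel_measurable M"
  unfolding phi_scales_def psi_def by measurable

text \<open>The covariance of \<open>phi_scales k b J u\<close> and \<open>phi_scales k b J v\<close> is \<open>k * overlap k J u v\<close>.\<close>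
definition overlap :: "nat \<Rightarrow> nat set \<Rightarrow> pt \<Rightarrow> pt \<Rightarrow> real" where
  "overlap k J u v = (\<Sum>j\<in>J. card (box_corners (j*k) u \<inter> box_corners (j*k) v) / 4^(j*k))"

lemma sum_indicator_union:
  fixes f :: "'b \<Rightarrow> real"
  assumes "finite A" "finite B"
  shows "(\<Sum>x\<in>A \<union> B. (\<alpha> * of_bool (x \<in> A) + \<beta> * of_bool (x \<in> B)) * f x) = \<alpha> * sum f A + \<beta> * sum f B"
proof -
  have "(A \<union> B) \<inter> {x. x \<in> A} = A" "(A \<union> B) \<inter> {x. x \<in> B} = B"
    by auto
  then show ?thesis
    using assms by (simp add: distrib_right sum.distrib mult.assoc flip: sum_distrib_left)
qed

lemma sum_square_indicator_union:
  fixes \<alpha> \<beta> :: real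
  assumes "finite A" "finite B"
  shows "(\<Sum>x\<in>A \<union> B. (\<alpha> * of_bool (x \<in> A) + \<beta> * of_bool (x \<in> B))^2)
    = \<alpha>^2 * card A + \<beta>^2 * card B + 2 * \<alpha> * \<beta> * card (A \<inter> B)"
proof -
  have square: "(\<alpha> * of_bool P + \<beta> * of_bool Q)^2 = \<alpha>^2 * of_bool P + \<beta>^2 * of_bool Q + 2 * \<alpha> * \<beta> * of_bool (P \<and> Q)"
    for P Q
    by (cases P; cases Q) (simp_all add: power2_eq_square algebra_simps)
  have "(A \<union> B) \<inter> {x. x \<in> A} = A" "(A \<union> B) \<inter> {x. x \<in> B} = B" "(A \<union> B) \<inter> {x. x \<in> A \<and> x \<in> B} = A \<inter> B"
    by auto
  then show ?thesis
    unfolding square using assms by (simp add: sum.distrib flip: sum_distrib_left)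
qed

lemma sum_image_scale_Sigma:
  fixes g :: "nat \<times> 'b \<Rightarrow> 'c::comm_monoid_add"
  assumes "k \<ge> 1" and "finite J" and "\<And>j. finite (U j)"
  shows "(\<Sum>i\<in>(\<lambda>(j, x). (j*k, x)) ` Sigma J U. g i) = (\<Sum>j\<in>J. \<Sum>x\<in>U j. g (j*k, x))"
proof -
  have "inj_on (\<lambda>(j, x). (j*k, x)) (Sigma J U)"
    using assms(1) by (auto simp: inj_on_def)
  then have "(\<Sum>i\<in>(\<lambda>(j, x). (j*k, x)) ` Sigma J U. g i) = (\<Sum>(j, x)\<in>Sigma J U. g (j*k, x))"
    by (subst sum.reindex) (auto simp: case_prod_beta)
  also have "\<dots> = (\<Sum>j\<in>J. \<Sum>x\<in>U j. g (j*k, x))"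
    using assms(2,3) by (subst sum.Sigma) auto
  finally show ?thesis .
qed

lemma
  fixes \<alpha> \<beta> :: real
  assumes G: "gaussian_field M b" and k: "k \<ge> 1" and J: "finite J"
  shows integrable_exp_phi_scales_two_point:
      "integrable M (\<lambda>\<omega>. exp (\<alpha> * phi_scales k b J u \<omega> + \<beta> * phi_scales k b J v \<omega>))"
    and integral_exp_phi_scales_two_point:
      "(\<integral>\<omega>. exp (\<alpha> * phi_scales k b J u \<omega> + \<beta> * phi_scales k b J v \<omega>) \<partial>M)
         = exp (k * (\<alpha>^2 + \<beta>^2) * card J / 2 + \<alpha> * \<beta> * k * overlap k J u v)"
proof -
  define U where "U j = box_corners (j*k) u \<union> box_corners (j*k) v" for j
  define F where "F = (\<lambda>(j, x). (j*k, x)) ` Sigma J U"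
  define c where "c i = sqrt k * (\<alpha> * of_bool (u \<in> box (fst i) (snd i)) + \<beta> * of_bool (v \<in> box (fst i) (snd i)))"
    for i :: "nat \<times> pt"
  have finite_U: "finite (U j)" for j
    unfolding U_def by simp
  have finite_F: "finite F"
    unfolding F_def using J finite_U by auto
  have sum_F: "(\<Sum>i\<in>F. g i) = (\<Sum>j\<in>J. \<Sum>x\<in>U j. g (j*k, x))" for g :: "nat \<times> pt \<Rightarrow> real"
    unfolding F_def using k J finite_U by (rule sum_image_scale_Sigma)
  have c_scale: "c (j*k, x) = sqrt k * (\<alpha> * of_bool (x \<in> box_corners (j*k) u) + \<beta> * of_bool (x \<in> box_corners (j*k) v))"
    for j x
    unfolding c_def box_corners_def by simp
  have linear: "\<alpha> * phi_scales k b J u \<omega> + \<beta> * phi_scales k b J v \<omega> = (\<Sum>i\<in>F. c i * b (fst i) (snd i) \<omega>)" for \<omega>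
  proof -
    have "(\<Sum>x\<in>U j. c (j*k, x) * b (j*k) x \<omega>) = \<alpha> * psi k b j u \<omega> + \<beta> * psi k b j v \<omega>" for j
      using sum_indicator_union[of "box_corners (j*k) u" "box_corners (j*k) v" \<alpha> \<beta> "\<lambda>x. sqrt k * b (j*k) x \<omega>"]
      unfolding U_def c_scale psi_eq_sum_box_corners by (simp add: mult_ac)
    then show ?thesis
      unfolding sum_F phi_scales_def by (simp add: sum.distrib sum_distrib_left)
  qed
  have variance: "(\<Sum>i\<in>F. (c i)^2 / 4^fst i / 2) = k * (\<alpha>^2 + \<beta>^2) * card J / 2 + \<alpha> * \<beta> * k * overlap k J u v"
  proof -
    have "(\<Sum>x\<in>U j. (c (j*k, x))^2 / 4^(j*k) / 2)
        = k * (\<alpha>^2 + \<beta>^2) / 2 + \<alpha> * \<beta> * k * (card (box_corners (j*k) u \<inter> box_corners (j*k) v) / 4^(j*k))" for j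
    proof -
      have "(\<Sum>x\<in>U j. (c (j*k, x))^2 / 4^(j*k) / 2)
          = k / 4^(j*k) / 2 * (\<Sum>x\<in>U j. (\<alpha> * of_bool (x \<in> box_corners (j*k) u) + \<beta> * of_bool (x \<in> box_corners (j*k) v))^2)"
        unfolding c_scale sum_distrib_left by (intro sum.cong) (simp_all add: power_mult_distrib)
      then show ?thesis
        unfolding U_def sum_square_indicator_union[OF finite_box_corners finite_box_corners] card_box_corners
        by (simp add: field_simps)
    qed
    then show ?thesis
      unfolding sum_F overlap_def by (simp add: sum.distrib sum_distrib_left)
  qed
  show "integrable M (\<lambda>\<omega>. exp (\<alpha> * phi_scales k b J u \<omega> + \<beta> * phi_scales k b J v \<omega>))"
    unfolding linear by (rule integrable_exp_gaussian_field_sum[OF G finite_F])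
  show "(\<integral>\<omega>. exp (\<alpha> * phi_scales k b J u \<omega> + \<beta> * phi_scales k b J v \<omega>) \<partial>M)
      = exp (k * (\<alpha>^2 + \<beta>^2) * card J / 2 + \<alpha> * \<beta> * k * overlap k J u v)"
    unfolding linear integral_exp_gaussian_field_sum[OF G finite_F] variance ..
qed

lemma
  fixes \<gamma> :: real
  assumes G: "gaussian_field M b" and k: "k \<ge> 1" and J: "finite J"
  shows integrable_exp_phi_scales: "integrable M (\<lambda>\<omega>. exp (\<gamma> * phi_scales k b J u \<omega>))"
    and integral_exp_phi_scales: "(\<integral>\<omega>. exp (\<gamma> * phi_scales k b J u \<omega>) \<partial>M) = exp (\<gamma>^2 * k * card J / 2)"
  using integrable_exp_phi_scales_two_point[OF G k J, of \<gamma> u 0 u]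
    integral_exp_phi_scales_two_point[OF G k J, of \<gamma> u 0 u]
  by (simp_all add: algebra_simps)

lemma
  fixes \<gamma> :: real
  assumes G: "gaussian_field M b" and k: "k \<ge> 1" and J: "finite J"
  shows integrable_exp_phi_scales_pair:
      "integrable M (\<lambda>\<omega>. exp (\<gamma> * phi_scales k b J u \<omega>) * exp (\<gamma> * phi_scales k b J v \<omega>))"
    and integral_exp_phi_scales_pair:
      "(\<integral>\<omega>. exp (\<gamma> * phi_scales k b J u \<omega>) * exp (\<gamma> * phi_scales k b J v \<omega>) \<partial>M)
         = exp (\<gamma>^2 * k * card J + \<gamma>^2 * k * overlap k J u v)"
  using integrable_exp_phi_scales_two_point[OF G k J, of \<gamma> u \<gamma> v]
    integral_exp_phi_scales_two_point[OF G k J, of \<gamma> u \<gamma> v]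
  by (simp_all add: exp_add[symmetric] power2_eq_square algebra_simps)

lemma overlap_le_card_scales:
  assumes "finite J"
  shows "overlap k J u v \<le> card {j\<in>J. supdist u v < 2^(j*k)}"
proof -
  have "card (box_corners (j*k) u \<inter> box_corners (j*k) v) / 4^(j*k) \<le> of_bool (supdist u v < 2^(j*k))" for j
  proof (cases "supdist u v < 2^(j*k)")
    case True
    have "card (box_corners (j*k) u \<inter> box_corners (j*k) v) \<le> card (box_corners (j*k) u)"
      by (intro card_mono) auto
    then have "real (card (box_corners (j*k) u \<inter> box_corners (j*k) v)) \<le> 4^(j*k)"
      unfolding card_box_corners by (metis of_nat_le_iff of_nat_numeral of_nat_power)
    then show ?thesis
      using True by simp
  next
    case False
    then show ?thesis
      by (simp add: box_corners_disjoint)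
  qed
  then have "overlap k J u v \<le> (\<Sum>j\<in>J. of_bool (supdist u v < 2^(j*k)))"
    unfolding overlap_def by (intro sum_mono)
  also have "\<dots> = card {j\<in>J. supdist u v < 2^(j*k)}"
    using assms by (simp add: Int_def)
  finally show ?thesis .
qed

lemma overlap_eq_0_if_far:
  assumes "2^(m*k) \<le> supdist u v"
  shows "overlap k {..<m} u v = 0"
proof -
  have "box_corners (j*k) u \<inter> box_corners (j*k) v = {}" if "j < m" for j
  proof (rule box_corners_disjoint)
    have "(2::int)^(j*k) \<le> 2^(m*k)"
      using that by (intro power_increasing) auto
    then show "2^(j*k) \<le> supdist u v"
      using assms by linarith
  qed
  then show ?thesis
    unfolding overlap_def by simp
qed

section \<open>Sums over close pairs\<close>

lemma card_sup_ball_le: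
  fixes Y :: real
  assumes Y: "Y \<ge> 1"
  shows "card {v\<in>S. supdist u v < Y} \<le> 9 * Y^2"
proof -
  define r where "r = \<lfloor>Y\<rfloor>"
  have r: "0 \<le> r" "2 * r + 1 \<le> 3 * Y"
    unfolding r_def using Y by linarith+
  have "{v\<in>S. supdist u v < Y} \<subseteq> {fst u - r..fst u + r} \<times> {snd u - r..snd u + r}"
    unfolding r_def supdist_def by (auto simp: abs_le_iff) linarith+
  then have "card {v\<in>S. supdist u v < Y} \<le> card ({fst u - r..fst u + r} \<times> {snd u - r..snd u + r})"
    by (rule card_mono[rotated]) simp
  also have "\<dots> = nat (2 * r + 1) * nat (2 * r + 1)"
    by (simp add: card_cartesian_product)
  finally have "card {v\<in>S. supdist u v < Y} \<le> real (nat (2 * r + 1) * nat (2 * r + 1))"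
    by (simp only: of_nat_le_iff)
  also have "\<dots> = (2 * real_of_int r + 1)^2"
    using r(1) by (simp add: power2_eq_square)
  also have "\<dots> \<le> (3 * Y)^2"
    using r by (intro power_mono) auto
  finally show ?thesis
    by (simp add: power_mult_distrib)
qed

text \<open>The counted scales lie in \<open>{t..<m}\<close> for \<open>t\<close> the smallest of them (\<open>t = m\<close> if there is none);
  summing over all candidates \<open>t\<close> replaces this unknown \<open>t\<close>.\<close>
lemma exp_card_scales_le_sum:
  fixes c :: real and d :: int
  assumes c: "c \<ge> 0"
  shows "exp (c * card {j\<in>{..<m}. d < 2^(j*k)})
    \<le> (\<Sum>t\<le>m. of_bool (t = m \<or> d < 2^(t*k)) * exp (c * (real m - real t)))"
proof -
  define S where "S = {j\<in>{..<m}. d < 2^(j*k)}"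
  obtain t where t: "t \<le> m" "t = m \<or> d < 2^(t*k)" "card S \<le> m - t"
  proof (cases "S = {}")
    case True
    then show ?thesis
      using that[of m] by simp
  next
    case False
    have finite: "finite S"
      unfolding S_def by simp
    have "S \<subseteq> {Min S..<m}"
    proof
      fix x assume "x \<in> S"
      then show "x \<in> {Min S..<m}"
        using Min_le[OF finite] unfolding S_def by auto
    qed
    moreover have "Min S \<in> S"
      using finite False by (rule Min_in)
    ultimately show ?thesis
      using that[of "Min S"] card_mono[of "{Min S..<m}" S] unfolding S_def by auto
  qed
  have "exp (c * card S) \<le> exp (c * (real m - real t))"
    using t c by (intro exp_le_cancel_iff[THEN iffD2] mult_left_mono) auto
  also have "\<dots> = of_bool (t = m \<or> d < 2^(t*k)) * exp (c * (real m - real t))"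
    using t by simp
  also have "\<dots> \<le> (\<Sum>t\<le>m. of_bool (t = m \<or> d < 2^(t*k)) * exp (c * (real m - real t)))"
    by (rule member_le_sum) (use t in auto)
  finally show ?thesis
    unfolding S_def .
qed

lemma min_power2_le_powr:
  fixes R X A :: real
  assumes "R > 0" "X > 0" "0 \<le> A" "A \<le> 2"
  shows "(min R X)^2 \<le> R powr (2 - A) * X powr A"
proof (cases "X \<le> R")
  case True
  have "X^2 = X powr (2 - A) * X powr A"
    using assms by (simp add: powr_add[symmetric] powr_numeral)
  also have "\<dots> \<le> R powr (2 - A) * X powr A"
    using True assms by (intro mult_right_mono powr_mono2) auto
  finally show ?thesis
    using True by (simp add: min_absorb2)
next
  case False
  have "R^2 = R powr (2 - A) * R powr A"
    using assms by (simp add: powr_add[symmetric] powr_numeral)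
  also have "\<dots> \<le> R powr (2 - A) * X powr A"
    using False assms by (intro mult_left_mono powr_mono2) auto
  finally show ?thesis
    using False by (simp add: min_absorb1)
qed

lemma exp_mul_min_square_le:
  fixes a R :: real
  assumes a: "0 \<le> a" "a \<le> 2 * ln 2" and R: "R \<ge> 1"
  shows "exp (a * k * (real m - real t)) * (9 * (min R (2^(t*k)))^2) \<le> 9 * exp (a * k * m) * R powr (2 - a / ln 2)"
proof -
  define A where "A = a / ln 2"
  have A: "0 \<le> A" "A \<le> 2"
    unfolding A_def using a by (auto simp: field_simps)
  have "exp (a * k * t) = (2^(t*k)) powr A"
    unfolding A_def by (simp add: powr_def ln_realpow)
  moreover have "(min R (2^(t*k)))^2 \<le> R powr (2 - A) * (2^(t*k)) powr A"
    using R A by (intro min_power2_le_powr) auto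
  ultimately have "exp (a * k * (real m - real t)) * (9 * (min R (2^(t*k)))^2)
      \<le> 9 * R powr (2 - A) * (exp (a * k * (real m - real t)) * exp (a * k * t))"
    by (simp add: mult_left_mono)
  also have "\<dots> = 9 * exp (a * k * m) * R powr (2 - A)"
    by (simp add: exp_add[symmetric] algebra_simps)
  finally show ?thesis
    unfolding A_def .
qed

lemma sum_exp_overlap_ball_le:
  fixes a R :: real
  assumes S: "finite S" and a: "0 \<le> a" "a \<le> 2 * ln 2" and R: "R \<ge> 1" "R \<le> 2^(m*k)"
  shows "(\<Sum>v\<in>{v\<in>S. supdist u v < R}. exp (a * k * overlap k {..<m} u v))
    \<le> 9 * (real m + 1) * exp (a * k * m) * R powr (2 - a / ln 2)"
proof -
  define V where "V = {v\<in>S. supdist u v < R}"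
  define P where "P t v \<longleftrightarrow> t = m \<or> supdist u v < 2^(t*k)" for t v
  have "(\<Sum>v\<in>V. exp (a * k * overlap k {..<m} u v))
      \<le> (\<Sum>v\<in>V. \<Sum>t\<le>m. of_bool (P t v) * exp (a * k * (real m - real t)))"
  proof (intro sum_mono)
    fix v
    have "exp (a * k * overlap k {..<m} u v) \<le> exp ((a * k) * card {j\<in>{..<m}. supdist u v < 2^(j*k)})"
      using overlap_le_card_scales[of "{..<m}" k u v] a by (simp add: mult_left_mono)
    also have "\<dots> \<le> (\<Sum>t\<le>m. of_bool (P t v) * exp (a * k * (real m - real t)))"
      unfolding P_def by (rule exp_card_scales_le_sum) (use a in simp)
    finally show "exp (a * k * overlap k {..<m} u v) \<le> (\<Sum>t\<le>m. of_bool (P t v) * exp (a * k * (real m - real t)))" .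
  qed
  also have "\<dots> = (\<Sum>t\<le>m. exp (a * k * (real m - real t)) * card {v\<in>V. P t v})"
    using S unfolding V_def by (subst sum.swap) (simp add: Int_def mult.commute)
  also have "\<dots> \<le> (\<Sum>t\<le>m. exp (a * k * (real m - real t)) * (9 * (min R (2^(t*k)))^2))"
  proof (intro sum_mono mult_left_mono)
    fix t assume "t \<in> {..m}"
    have "{v\<in>V. P t v} \<subseteq> {v\<in>S. supdist u v < min R (2^(t*k))}"
    proof
      fix v assume "v \<in> {v\<in>V. P t v}"
      then have v: "v \<in> S" "supdist u v < R" "t = m \<or> supdist u v < 2^(t*k)"
        unfolding V_def P_def by auto
      have "real_of_int (supdist u v) < 2^(t*k)"
        using v(3) less_le_trans[OF v(2) R(2)] by auto
      then show "v \<in> {v\<in>S. supdist u v < min R (2^(t*k))}"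
        using v by simp
    qed
    then have "real (card {v\<in>V. P t v}) \<le> card {v\<in>S. supdist u v < min R (2^(t*k))}"
      using S by (simp add: card_mono)
    also have "\<dots> \<le> 9 * (min R (2^(t*k)))^2"
      by (rule card_sup_ball_le) (use R in auto)
    finally show "card {v\<in>V. P t v} \<le> 9 * (min R (2^(t*k)))^2" .
  qed simp
  also have "\<dots> \<le> (\<Sum>t\<le>m. 9 * exp (a * k * m) * R powr (2 - a / ln 2))"
    by (intro sum_mono exp_mul_min_square_le a R)
  also have "\<dots> = 9 * (real m + 1) * exp (a * k * m) * R powr (2 - a / ln 2)"
    by simp
  finally show ?thesis
    unfolding V_def .
qed

lemma sum_exp_overlap_close_pairs_le:
  fixes a R :: real
  assumes S: "finite S" and a: "0 \<le> a" "a \<le> 2 * ln 2" and R: "R \<ge> 1" "R \<le> 2^(m*k)"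
    and P: "P \<subseteq> {(u, v). u \<in> S \<and> v \<in> S \<and> supdist u v < R}"
  shows "(\<Sum>(u, v)\<in>P. exp (a * k * overlap k {..<m} u v))
    \<le> card S * (9 * (real m + 1) * exp (a * k * m) * R powr (2 - a / ln 2))"
proof -
  have "P \<subseteq> (SIGMA u:S. {v\<in>S. supdist u v < R})"
    using P by auto
  then have "(\<Sum>(u, v)\<in>P. exp (a * k * overlap k {..<m} u v))
      \<le> (\<Sum>(u, v)\<in>(SIGMA u:S. {v\<in>S. supdist u v < R}). exp (a * k * overlap k {..<m} u v))"
    using S by (intro sum_mono2) auto
  also have "\<dots> = (\<Sum>u\<in>S. \<Sum>v\<in>{v\<in>S. supdist u v < R}. exp (a * k * overlap k {..<m} u v))"
    using S by (subst sum.Sigma) auto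
  also have "\<dots> \<le> (\<Sum>u\<in>S. 9 * (real m + 1) * exp (a * k * m) * R powr (2 - a / ln 2))"
    by (intro sum_mono sum_exp_overlap_ball_le S a R)
  finally show ?thesis
    by simp
qed

section \<open>Probability estimates\<close>

lemma (in finite_measure) measure_gt_le_integral_div:
  fixes f :: "'a \<Rightarrow> real"
  assumes f: "integrable M f" and nonneg: "\<And>\<omega>. \<omega> \<in> space M \<Longrightarrow> 0 \<le> f \<omega>" and c: "c > 0"
  shows "measure M {\<omega>\<in>space M. f \<omega> > c} \<le> (\<integral>\<omega>. f \<omega> \<partial>M) / c"
proof -
  have [measurable]: "f \<in> borel_measurable M"
    using f by (rule borel_measurable_integrable)
  have "measure M {\<omega>\<in>space M. f \<omega> > c} \<le> measure M {\<omega>\<in>space M. f \<omega> \<ge> c}"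
    by (intro finite_measure_mono) auto
  also have "\<dots> \<le> (\<integral>\<omega>. f \<omega> \<partial>M) / c"
    using nonneg c by (intro integral_Markov_inequality_measure[OF f, of "space M"]) auto
  finally show ?thesis .
qed

lemma prob_sum_pairs_exp_phi_scales_gt_le:
  fixes \<gamma> R K :: real
  assumes G: "gaussian_field M b" and k: "k \<ge> 1" and \<gamma>: "\<gamma>^2 \<le> 2 * ln 2"
    and R: "R \<ge> 1" "R \<le> 2^(m*k)" and P: "P \<subseteq> {(u, v). u \<in> S \<and> v \<in> S \<and> supdist u v < R}"
    and S: "finite S" and K: "K > 0"
  shows "measure M {\<omega>\<in>space M.
      (\<Sum>(u, v)\<in>P. exp (\<gamma> * phi_scales k b {..<m} u \<omega>) * exp (\<gamma> * phi_scales k b {..<m} v \<omega>)) > K}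
    \<le> real (card S) * 9 * (real m + 1) * exp (2 * \<gamma>^2 * k * m) * R powr (2 - \<gamma>^2 / ln 2) / K"
proof -
  interpret prob_space M
    using G by (rule gaussian_field_prob_space)
  have integrable: "integrable M (\<lambda>\<omega>. exp (\<gamma> * phi_scales k b {..<m} u \<omega>) * exp (\<gamma> * phi_scales k b {..<m} v \<omega>))"
    for u v
    using integrable_exp_phi_scales_pair[OF G k] by simp
  have "measure M {\<omega>\<in>space M.
      (\<Sum>(u, v)\<in>P. exp (\<gamma> * phi_scales k b {..<m} u \<omega>) * exp (\<gamma> * phi_scales k b {..<m} v \<omega>)) > K}
    \<le> (\<integral>\<omega>. (\<Sum>(u, v)\<in>P. exp (\<gamma> * phi_scales k b {..<m} u \<omega>) * exp (\<gamma> * phi_scales k b {..<m} v \<omega>)) \<partial>M) / K"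
    using integrable K by (intro measure_gt_le_integral_div) (auto intro: sum_nonneg simp: case_prod_beta)
  also have "(\<integral>\<omega>. (\<Sum>(u, v)\<in>P. exp (\<gamma> * phi_scales k b {..<m} u \<omega>) * exp (\<gamma> * phi_scales k b {..<m} v \<omega>)) \<partial>M)
      = exp (\<gamma>^2 * k * m) * (\<Sum>(u, v)\<in>P. exp (\<gamma>^2 * k * overlap k {..<m} u v))"
    using integrable integral_exp_phi_scales_pair[OF G k]
    by (simp add: case_prod_beta exp_add sum_distrib_left)
  also have "\<dots> \<le> exp (\<gamma>^2 * k * m) * (card S * (9 * (real m + 1) * exp (\<gamma>^2 * k * m) * R powr (2 - \<gamma>^2 / ln 2)))"
    by (intro mult_left_mono sum_exp_overlap_close_pairs_le S R P) (use \<gamma> in auto)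
  also have "\<dots> = real (card S) * 9 * (real m + 1) * exp (2 * \<gamma>^2 * k * m) * R powr (2 - \<gamma>^2 / ln 2)"
    by (simp add: mult_ac flip: exp_add)
  finally show ?thesis
    using K by (simp add: divide_right_mono)
qed

lemma finite_VN [simp]: "finite (VN n)"
  unfolding VN_def by simp

lemma card_VN: "card (VN n) = 4^n"
  unfolding VN_def by (simp add: card_cartesian_product power_mult_distrib[symmetric] nat_power_eq)

lemma
  fixes \<gamma> :: real and m n :: nat
  assumes G: "gaussian_field M b" and k: "k \<ge> 1"
  defines "Z \<equiv> \<lambda>\<omega>. \<Sum>w\<in>VN n. exp (\<gamma> * phi_scales k b {..<m} w \<omega>)"
  shows integrable_partition_function: "integrable M Z"
    and integrable_partition_function_square: "integrable M (\<lambda>\<omega>. (Z \<omega>)^2)"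
    and integral_partition_function: "(\<integral>\<omega>. Z \<omega> \<partial>M) = 4^n * exp (\<gamma>^2 * k * m / 2)"
    and integral_partition_function_square: "(\<integral>\<omega>. (Z \<omega>)^2 \<partial>M)
      = (\<Sum>(u, v)\<in>VN n \<times> VN n. exp (\<gamma>^2 * k * m) * exp (\<gamma>^2 * k * overlap k {..<m} u v))"
proof -
  define e where "e w \<omega> = exp (\<gamma> * phi_scales k b {..<m} w \<omega>)" for w \<omega>
  have integrable_e: "integrable M (e w)" for w
    unfolding e_def using integrable_exp_phi_scales[OF G k] by simp
  have integrable_ee: "integrable M (\<lambda>\<omega>. e u \<omega> * e v \<omega>)" for u v
    unfolding e_def using integrable_exp_phi_scales_pair[OF G k] by simp
  have Z: "Z \<omega> = (\<Sum>w\<in>VN n. e w \<omega>)" for \<omega>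
    unfolding Z_def e_def ..
  have Z_square: "(Z \<omega>)^2 = (\<Sum>(u, v)\<in>VN n \<times> VN n. e u \<omega> * e v \<omega>)" for \<omega>
    unfolding Z power2_eq_square sum_product sum.cartesian_product ..
  show "integrable M Z"
    unfolding Z using integrable_e by auto
  show "integrable M (\<lambda>\<omega>. (Z \<omega>)^2)"
    unfolding Z_square using integrable_ee by (auto simp: case_prod_beta)
  have "(\<integral>\<omega>. Z \<omega> \<partial>M) = (\<Sum>w\<in>VN n. \<integral>\<omega>. e w \<omega> \<partial>M)"
    unfolding Z by (rule Bochner_Integration.integral_sum[OF integrable_e])
  then show "(\<integral>\<omega>. Z \<omega> \<partial>M) = 4^n * exp (\<gamma>^2 * k * m / 2)"
    unfolding e_def integral_exp_phi_scales[OF G k finite_lessThan] by (simp add: card_VN)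
  show "(\<integral>\<omega>. (Z \<omega>)^2 \<partial>M)
      = (\<Sum>(u, v)\<in>VN n \<times> VN n. exp (\<gamma>^2 * k * m) * exp (\<gamma>^2 * k * overlap k {..<m} u v))"
    unfolding Z_square using integrable_ee integral_exp_phi_scales_pair[OF G k]
    by (simp add: Bochner_Integration.integral_sum e_def case_prod_beta exp_add)
qed

lemma variance_partition_function_le:
  fixes \<gamma> :: real and m n :: nat
  assumes G: "gaussian_field M b" and k: "k \<ge> 1" and \<gamma>: "\<gamma>^2 \<le> 2 * ln 2"
  defines "Z \<equiv> \<lambda>\<omega>. \<Sum>w\<in>VN n. exp (\<gamma> * phi_scales k b {..<m} w \<omega>)"
    and "c \<equiv> 4^n * exp (\<gamma>^2 * k * m / 2)"
  shows "(\<integral>\<omega>. (Z \<omega> - c)^2 \<partial>M)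
    \<le> 4^n * 9 * (real m + 1) * exp (2 * \<gamma>^2 * k * m) * (2^(m*k)) powr (2 - \<gamma>^2 / ln 2)"
proof -
  interpret prob_space M
    using G by (rule gaussian_field_prob_space)
  have Z: "integrable M Z" "integrable M (\<lambda>\<omega>. (Z \<omega>)^2)" "(\<integral>\<omega>. Z \<omega> \<partial>M) = c"
    "(\<integral>\<omega>. (Z \<omega>)^2 \<partial>M)
      = (\<Sum>(u, v)\<in>VN n \<times> VN n. exp (\<gamma>^2 * k * m) * exp (\<gamma>^2 * k * overlap k {..<m} u v))"
    unfolding Z_def c_def
    by (rule integrable_partition_function[OF G k] integrable_partition_function_square[OF G k]
        integral_partition_function[OF G k] integral_partition_function_square[OF G k])+
  have c: "c^2 = (\<Sum>(u, v)\<in>VN n \<times> VN n. exp (\<gamma>^2 * k * m))"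
    unfolding c_def by (simp add: power2_eq_square card_VN mult_ac flip: exp_add)
  have "(\<integral>\<omega>. (Z \<omega> - c)^2 \<partial>M) = (\<integral>\<omega>. (Z \<omega>)^2 - 2 * c * Z \<omega> + c^2 \<partial>M)"
    by (simp add: power2_diff algebra_simps)
  also have "\<dots> = (\<integral>\<omega>. (Z \<omega>)^2 \<partial>M) - c^2"
    using Z by (simp add: prob_space power2_eq_square)
  also have "\<dots> = (\<Sum>(u, v)\<in>VN n \<times> VN n. exp (\<gamma>^2 * k * m) * (exp (\<gamma>^2 * k * overlap k {..<m} u v) - 1))"
    unfolding Z(4) c by (simp add: case_prod_beta sum_subtractf right_diff_distrib)
  also have "\<dots> \<le> (\<Sum>(u, v)\<in>VN n \<times> VN n. of_bool (supdist u v < 2^(m*k)) *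
      (exp (\<gamma>^2 * k * m) * exp (\<gamma>^2 * k * overlap k {..<m} u v)))"
    by (intro sum_mono) (auto simp: overlap_eq_0_if_far not_less)
  also have "\<dots> = exp (\<gamma>^2 * k * m) *
      (\<Sum>(u, v)\<in>{(u, v). u \<in> VN n \<and> v \<in> VN n \<and> supdist u v < 2^(m*k)}. exp (\<gamma>^2 * k * overlap k {..<m} u v))"
  proof -
    have "VN n \<times> VN n \<inter> {p. supdist (fst p) (snd p) < 2^(m*k)}
        = {(u, v). u \<in> VN n \<and> v \<in> VN n \<and> supdist u v < 2^(m*k)}"
      by auto
    then show ?thesis
      by (simp add: sum_distrib_left case_prod_beta)
  qed
  also have "\<dots> \<le> exp (\<gamma>^2 * k * m) * (4^n * (9 * (real m + 1) * exp (\<gamma>^2 * k * m) * (2^(m*k)) powr (2 - \<gamma>^2 / ln 2)))"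
    using sum_exp_overlap_close_pairs_le[of "VN n" "\<gamma>^2" "2^(m*k)" m k] \<gamma>
    by (intro mult_left_mono) (auto simp: card_VN)
  also have "\<dots> = 4^n * 9 * (real m + 1) * exp (2 * \<gamma>^2 * k * m) * (2^(m*k)) powr (2 - \<gamma>^2 / ln 2)"
  proof -
    have "exp (2 * \<gamma>^2 * k * m) = exp (\<gamma>^2 * k * m) * exp (\<gamma>^2 * k * m)"
      unfolding exp_add[symmetric] by simp
    then show ?thesis
      by (simp add: mult_ac)
  qed
  finally show ?thesis .
qed

lemma prob_partition_function_lt_le:
  fixes \<gamma> :: real and m n :: nat
  assumes G: "gaussian_field M b" and k: "k \<ge> 1" and \<gamma>: "\<gamma>^2 \<le> 2 * ln 2"
  defines "c \<equiv> 4^n * exp (\<gamma>^2 * k * m / 2)"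
  shows "measure M {\<omega>\<in>space M. (\<Sum>w\<in>VN n. exp (\<gamma> * phi_scales k b {..<m} w \<omega>)) < c / 2}
    \<le> 36 * (real m + 1) * exp (\<gamma>^2 * k * m) * (2^(m*k)) powr (2 - \<gamma>^2 / ln 2) / 4^n"
proof -
  interpret prob_space M
    using G by (rule gaussian_field_prob_space)
  define Z where "Z = (\<lambda>\<omega>. \<Sum>w\<in>VN n. exp (\<gamma> * phi_scales k b {..<m} w \<omega>))"
  have c: "c > 0" "c^2 = 4^n * 4^n * exp (\<gamma>^2 * k * m)"
    unfolding c_def by (simp_all add: power2_eq_square mult_ac flip: exp_add)
  have integrable: "integrable M Z" "integrable M (\<lambda>\<omega>. (Z \<omega>)^2)"
    unfolding Z_def by (rule integrable_partition_function[OF G k] integrable_partition_function_square[OF G k])+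
  then have [measurable]: "Z \<in> borel_measurable M"
    by (simp add: borel_measurable_integrable)
  have "measure M {\<omega>\<in>space M. Z \<omega> < c / 2} \<le> measure M {\<omega>\<in>space M. \<bar>Z \<omega> - c\<bar> \<ge> c / 2}"
    by (intro finite_measure_mono) (auto simp: abs_if)
  also have "\<dots> \<le> (\<integral>\<omega>. (Z \<omega> - c)^2 \<partial>M) / (c / 2)^2"
    using integrable c by (intro second_moment_method) (auto simp: power2_diff)
  also have "\<dots> \<le> 4^n * 9 * (real m + 1) * exp (2 * \<gamma>^2 * k * m) * (2^(m*k)) powr (2 - \<gamma>^2 / ln 2) / (c / 2)^2"
    unfolding Z_def c_def by (intro divide_right_mono variance_partition_function_le[OF G k \<gamma>]) simp
  also have "\<dots> = 36 * (real m + 1) * exp (\<gamma>^2 * k * m) * (2^(m*k)) powr (2 - \<gamma>^2 / ln 2) / 4^n"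
  proof -
    have "exp (2 * \<gamma>^2 * k * m) = exp (\<gamma>^2 * k * m) * exp (\<gamma>^2 * k * m)"
      unfolding exp_add[symmetric] by simp
    then show ?thesis
      using c by (simp add: power_divide field_simps)
  qed
  finally show ?thesis
    unfolding Z_def .
qed

lemma prob_exists_phi_scales_lt_le:
  fixes \<eta> T :: real
  assumes G: "gaussian_field M b" and k: "k \<ge> 1" and J: "finite J" and S: "finite S" and \<eta>: "\<eta> > 0"
  shows "measure M {\<omega>\<in>space M. \<exists>w\<in>S. phi_scales k b J w \<omega> < -T}
    \<le> card S * exp (k * \<eta>^2 * card J / 2 - \<eta> * T)"
proof -
  interpret prob_space M
    using G by (rule gaussian_field_prob_space)
  have lower_tail: "measure M {\<omega>\<in>space M. phi_scales k b J w \<omega> < -T} \<le> exp (k * \<eta>^2 * card J / 2 - \<eta> * T)" for w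
  proof -
    have integrable: "integrable M (\<lambda>\<omega>. exp (- \<eta> * phi_scales k b J w \<omega>))"
      by (rule integrable_exp_phi_scales[OF G k J])
    have "\<eta> * T < - \<eta> * phi_scales k b J w \<omega>" if "phi_scales k b J w \<omega> < -T" for \<omega>
      using mult_strict_left_mono[OF that \<eta>] by simp
    then have "measure M {\<omega>\<in>space M. phi_scales k b J w \<omega> < -T}
        \<le> measure M {\<omega>\<in>space M. exp (- \<eta> * phi_scales k b J w \<omega>) > exp (\<eta> * T)}"
      using G by (intro finite_measure_mono) auto
    also have "\<dots> \<le> (\<integral>\<omega>. exp (- \<eta> * phi_scales k b J w \<omega>) \<partial>M) / exp (\<eta> * T)"
      by (rule measure_gt_le_integral_div[OF integrable]) auto
    also have "\<dots> = exp (k * \<eta>^2 * card J / 2 - \<eta> * T)"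
      unfolding integral_exp_phi_scales[OF G k J] by (simp add: exp_diff mult_ac)
    finally show ?thesis .
  qed
  have "measure M {\<omega>\<in>space M. \<exists>w\<in>S. phi_scales k b J w \<omega> < -T}
      = measure M (\<Union>w\<in>S. {\<omega>\<in>space M. phi_scales k b J w \<omega> < -T})"
    by (intro arg_cong[where f = "measure M"]) auto
  also have "\<dots> \<le> (\<Sum>w\<in>S. measure M {\<omega>\<in>space M. phi_scales k b J w \<omega> < -T})"
    using G S by (intro finite_measure_subadditive_finite) auto
  also have "\<dots> \<le> (\<Sum>w\<in>S. exp (k * \<eta>^2 * card J / 2 - \<eta> * T))"
    by (intro sum_mono lower_tail)
  also have "\<dots> = card S * exp (k * \<eta>^2 * card J / 2 - \<eta> * T)"
    by simp
  finally show ?thesis .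
qed

definition close_pairs :: "nat \<Rightarrow> real \<Rightarrow> (pt \<times> pt) set" where
  "close_pairs n \<kappa> = {(u, v). u \<in> VN n \<and> v \<in> VN n \<and> supdist u v < (2^n) powr (1 - \<kappa>)}"

lemma close_pairs_subset:
  assumes "\<kappa>' \<le> \<kappa>"
  shows "close_pairs n \<kappa> \<subseteq> {(u, v). u \<in> VN n \<and> v \<in> VN n \<and> supdist u v < (2^n) powr (1 - \<kappa>')}"
proof -
  have "((2::real)^n) powr (1 - \<kappa>) \<le> (2^n) powr (1 - \<kappa>')"
    using assms by (intro powr_mono) auto
  then show ?thesis
    unfolding close_pairs_def by auto
qed

lemma close_mass_eq:
  "close_mass k n \<gamma> \<kappa> b \<omega> =
     (\<Sum>(u, v)\<in>close_pairs n \<kappa>. exp (\<gamma> * phi k n b u \<omega>) * exp (\<gamma> * phi k n b v \<omega>))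
       / (\<Sum>w\<in>VN n. exp (\<gamma> * phi k n b w \<omega>))^2"
  unfolding close_mass_def mu_def close_pairs_def sum_divide_distrib
  by (intro sum.cong) (auto simp: power2_eq_square)

lemma close_mass_gt_cases:
  fixes \<gamma> T c K \<theta> :: real
  assumes \<gamma>: "\<gamma> \<ge> 0" and m\<^sub>1: "m\<^sub>1 \<le> n div k" and c: "c > 0"
    and \<theta>: "4 * K \<le> \<theta> * (exp (- \<gamma> * T) * c)^2" and large: "close_mass k n \<gamma> \<kappa> b \<omega> > \<theta>"
  shows "(\<Sum>(u, v)\<in>close_pairs n \<kappa>. exp (\<gamma> * phi k n b u \<omega>) * exp (\<gamma> * phi k n b v \<omega>)) > K
    \<or> (\<Sum>w\<in>VN n. exp (\<gamma> * phi_scales k b {..<m\<^sub>1} w \<omega>)) < c / 2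
    \<or> (\<exists>w\<in>VN n. phi_scales k b {m\<^sub>1..<n div k} w \<omega> < -T)"
proof (rule ccontr)
  assume "\<not> ?thesis"
  then have numerator: "(\<Sum>(u, v)\<in>close_pairs n \<kappa>. exp (\<gamma> * phi k n b u \<omega>) * exp (\<gamma> * phi k n b v \<omega>)) \<le> K"
    and coarse: "c / 2 \<le> (\<Sum>w\<in>VN n. exp (\<gamma> * phi_scales k b {..<m\<^sub>1} w \<omega>))"
    and fine: "\<And>w. w \<in> VN n \<Longrightarrow> -T \<le> phi_scales k b {m\<^sub>1..<n div k} w \<omega>"
    by auto
  define Z where "Z = (\<Sum>w\<in>VN n. exp (\<gamma> * phi k n b w \<omega>))"
  have "exp (- \<gamma> * T) * c / 2 \<le> exp (- \<gamma> * T) * (\<Sum>w\<in>VN n. exp (\<gamma> * phi_scales k b {..<m\<^sub>1} w \<omega>))"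
    using coarse by simp
  also have "\<dots> \<le> Z"
    unfolding Z_def sum_distrib_left phi_eq_phi_scales phi_scales_split[OF m\<^sub>1]
  proof (intro sum_mono)
    fix w assume "w \<in> VN n"
    then have "\<gamma> * (-T) \<le> \<gamma> * phi_scales k b {m\<^sub>1..<n div k} w \<omega>"
      using fine \<gamma> by (intro mult_left_mono) auto
    then show "exp (- \<gamma> * T) * exp (\<gamma> * phi_scales k b {..<m\<^sub>1} w \<omega>)
        \<le> exp (\<gamma> * (phi_scales k b {..<m\<^sub>1} w \<omega> + phi_scales k b {m\<^sub>1..<n div k} w \<omega>))"
      by (simp add: distrib_left flip: exp_add)
  qed
  finally have Z: "exp (- \<gamma> * T) * c / 2 \<le> Z" .
  have "0 \<le> (\<Sum>(u, v)\<in>close_pairs n \<kappa>. exp (\<gamma> * phi k n b u \<omega>) * exp (\<gamma> * phi k n b v \<omega>))"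
    by (intro sum_nonneg) auto
  then have K: "0 \<le> K"
    using numerator by linarith
  have "close_mass k n \<gamma> \<kappa> b \<omega> \<le> K / Z^2"
    unfolding close_mass_eq Z_def[symmetric] using numerator by (simp add: divide_right_mono)
  also have "\<dots> \<le> K / (exp (- \<gamma> * T) * c / 2)^2"
  proof -
    have "0 < exp (- \<gamma> * T) * c / 2"
      using c by simp
    then show ?thesis
      using Z K by (intro divide_left_mono power_mono mult_pos_pos zero_less_power) auto
  qed
  also have "\<dots> \<le> \<theta>"
    using \<theta> c by (simp add: power_divide field_simps)
  finally show False
    using large by simp
qed

lemma prob_close_mass_gt_le:
  fixes \<gamma> \<kappa> R T \<eta> \<theta> K :: real and k m\<^sub>1 n :: nat
  defines "m \<equiv> n div k" and "A \<equiv> \<gamma>^2 / ln 2"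
  assumes G: "gaussian_field M b" and k: "k \<ge> 1" and \<gamma>: "\<gamma> \<ge> 0" "\<gamma>^2 \<le> 2 * ln 2"
    and m\<^sub>1: "m\<^sub>1 \<le> m" and R: "R \<ge> 1" "R \<le> 2^(m*k)"
    and close: "close_pairs n \<kappa> \<subseteq> {(u, v). u \<in> VN n \<and> v \<in> VN n \<and> supdist u v < R}"
    and K: "K > 0" and \<eta>: "\<eta> > 0"
    and \<theta>: "4 * K \<le> \<theta> * (exp (- \<gamma> * T) * (4^n * exp (\<gamma>^2 * k * m\<^sub>1 / 2)))^2"
  shows "measure M {\<omega>\<in>space M. close_mass k n \<gamma> \<kappa> b \<omega> > \<theta>}
    \<le> 4^n * 9 * (real m + 1) * exp (2 * \<gamma>^2 * k * m) * R powr (2 - A) / K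
      + 36 * (real m\<^sub>1 + 1) * exp (\<gamma>^2 * k * m\<^sub>1) * (2^(m\<^sub>1*k)) powr (2 - A) / 4^n
      + 4^n * exp (k * \<eta>^2 * (m - m\<^sub>1) / 2 - \<eta> * T)"
proof -
  interpret prob_space M
    using G by (rule gaussian_field_prob_space)
  have [measurable]: "phi_scales k b J z \<in> borel_measurable M" for J z
    using G by (rule phi_scales_measurable)
  define c where "c = 4^n * exp (\<gamma>^2 * k * m\<^sub>1 / 2)"
  define E\<^sub>1 where "E\<^sub>1 = {\<omega>\<in>space M. (\<Sum>(u, v)\<in>close_pairs n \<kappa>.
      exp (\<gamma> * phi_scales k b {..<m} u \<omega>) * exp (\<gamma> * phi_scales k b {..<m} v \<omega>)) > K}"
  define E\<^sub>2 where "E\<^sub>2 = {\<omega>\<in>space M. (\<Sum>w\<in>VN n. exp (\<gamma> * phi_scales k b {..<m\<^sub>1} w \<omega>)) < c / 2}"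
  define E\<^sub>3 where "E\<^sub>3 = {\<omega>\<in>space M. \<exists>w\<in>VN n. phi_scales k b {m\<^sub>1..<m} w \<omega> < -T}"
  have events: "E\<^sub>1 \<in> sets M" "E\<^sub>2 \<in> sets M" "E\<^sub>3 \<in> sets M"
    unfolding E\<^sub>1_def E\<^sub>2_def E\<^sub>3_def by measurable
  have "{\<omega>\<in>space M. close_mass k n \<gamma> \<kappa> b \<omega> > \<theta>} \<subseteq> E\<^sub>1 \<union> E\<^sub>2 \<union> E\<^sub>3"
    using close_mass_gt_cases[OF \<gamma>(1) m\<^sub>1[unfolded m_def], of c K \<theta> T \<kappa> b] \<theta>
    unfolding E\<^sub>1_def E\<^sub>2_def E\<^sub>3_def c_def m_def phi_eq_phi_scales by auto
  then have "measure M {\<omega>\<in>space M. close_mass k n \<gamma> \<kappa> b \<omega> > \<theta>} \<le> measure M (E\<^sub>1 \<union> E\<^sub>2 \<union> E\<^sub>3)"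
    using events by (intro finite_measure_mono) auto
  also have "\<dots> \<le> measure M E\<^sub>1 + measure M E\<^sub>2 + measure M E\<^sub>3"
    using events by (intro measure_Un_le[THEN order_trans] add_right_mono measure_Un_le) auto
  also have "measure M E\<^sub>1 \<le> 4^n * 9 * (real m + 1) * exp (2 * \<gamma>^2 * k * m) * R powr (2 - A) / K"
    using prob_sum_pairs_exp_phi_scales_gt_le[OF G k \<gamma>(2) R close finite_VN K]
    unfolding E\<^sub>1_def A_def by (simp add: card_VN)
  also have "measure M E\<^sub>2 \<le> 36 * (real m\<^sub>1 + 1) * exp (\<gamma>^2 * k * m\<^sub>1) * (2^(m\<^sub>1*k)) powr (2 - A) / 4^n"
    unfolding E\<^sub>2_def c_def A_def by (rule prob_partition_function_lt_le[OF G k \<gamma>(2)])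
  also have "measure M E\<^sub>3 \<le> 4^n * exp (k * \<eta>^2 * (m - m\<^sub>1) / 2 - \<eta> * T)"
    using prob_exists_phi_scales_lt_le[OF G k finite_atLeastLessThan[of m\<^sub>1 m] finite_VN[of n] \<eta>, of T]
    unfolding E\<^sub>3_def by (simp add: card_VN)
  finally show ?thesis
    by simp
qed

section \<open>Choice of the parameters\<close>

lemma exp_eq_two_powr: "exp y = 2 powr (y / ln (2::real))"
  by (simp add: powr_def)

lemma two_pow_powr: "((2::real)^n) powr y = 2 powr (n * y)"
  by (simp add: powr_powr flip: powr_realpow)

lemma four_pow_eq_two_powr: "(4::real)^n = 2 powr (2 * n)"
proof -
  have "(4::real)^n = 2^(2 * n)"
    by (simp add: power_mult)
  then show ?thesis
    by (metis of_nat_mult of_nat_numeral powr_realpow zero_less_numeral)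
qed

lemma real_mult_div_le: "real k * real (n div k) \<le> real n"
  by (metis of_nat_le_iff of_nat_mult times_div_less_eq_dividend)

lemma
  assumes "k \<ge> 1" "q \<ge> 1"
  shows real_mult_div_mult_le: "real k * real (n div (k * q)) \<le> real n / real q"
    and real_div_less_mult_div_mult: "real n / real q < real k + real k * real (n div (k * q))"
proof -
  have "real (k * q) * real (n div (k * q)) \<le> real n"
    by (rule real_mult_div_le)
  then show "real k * real (n div (k * q)) \<le> real n / real q"
    using assms by (simp add: field_simps)
  have "n < k * q + k * q * (n div (k * q))"
    using assms by (intro dividend_less_times_div) simp
  then have "real n < real k * real q + real k * real q * real (n div (k * q))"
    by (metis of_nat_add of_nat_less_iff of_nat_mult)
  then show "real n / real q < real k + real k * real (n div (k * q))"
    using assms by (simp add: field_simps)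
qed

lemma threshold_exponent_le:
  fixes \<gamma> \<kappa>' \<tau> A B :: real and k q n :: nat
  defines "m \<equiv> n div k" and "m\<^sub>1 \<equiv> n div k - n div (k * q)"
  assumes k: "k \<ge> 1" and A: "0 \<le> A" and B: "B = \<kappa>' * (2 - A)"
    and q: "q \<ge> 1" "A \<le> B * q / 4" and \<tau>: "\<gamma> * \<tau> \<le> ln 2 * B / 8"
  shows "B * n / 8 + (B * n / 4 + 2 * real n + 2 * (A * (real k * real m)) + (1 - \<kappa>') * (2 - A) * n)
    \<le> - (B * n / 8) + 2 * (- (\<gamma> * \<tau> * n / ln 2) + 2 * real n + A * (real k * real m\<^sub>1) / 2)"
proof -
  define L where "L = n div (k * q)"
  have "A * (real k * real L) \<le> A * (n / q)"
    using real_mult_div_mult_le[OF k q(1)] A unfolding L_def by (intro mult_left_mono) auto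
  also have "\<dots> \<le> B * n / 4"
  proof -
    have "A * n \<le> B * q / 4 * n"
      using q(2) by (intro mult_right_mono) auto
    then show ?thesis
      using q(1) by (simp add: field_simps)
  qed
  finally have AL: "A * (real k * real L) \<le> B * n / 4" .
  have Am: "A * (real k * real m) \<le> A * n"
    using real_mult_div_le A unfolding m_def by (intro mult_left_mono) auto
  have "\<gamma> * \<tau> * n \<le> ln 2 * B / 8 * n"
    using \<tau> by (intro mult_right_mono) auto
  then have \<gamma>\<tau>: "\<gamma> * \<tau> * n / ln 2 \<le> B * n / 8"
    by (simp add: field_simps)
  have "L \<le> m"
    unfolding L_def m_def using q k by (intro div_le_mono2) auto
  then have "A * (real k * real m\<^sub>1) = A * (real k * real m) - A * (real k * real L)"
    by (simp add: m\<^sub>1_def m_def L_def of_nat_diff algebra_simps)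
  moreover have "(1 - \<kappa>') * (2 - A) * n = 2 * real n - A * n - B * n"
    unfolding B by (simp add: algebra_simps)
  ultimately have "(- (B * n / 8) + 2 * (- (\<gamma> * \<tau> * n / ln 2) + 2 * real n + A * (real k * real m\<^sub>1) / 2))
      - (B * n / 8 + (B * n / 4 + 2 * real n + 2 * (A * (real k * real m)) + (1 - \<kappa>') * (2 - A) * n))
      = (B * n / 4 - 2 * (\<gamma> * \<tau> * n / ln 2)) + (B * n / 4 - A * (real k * real L)) + (A * n - A * (real k * real m))"
    by (simp add: algebra_simps)
  moreover have "0 \<le> (B * n / 4 - 2 * (\<gamma> * \<tau> * n / ln 2)) + (B * n / 4 - A * (real k * real L)) + (A * n - A * (real k * real m))"
    using AL Am \<gamma>\<tau> by linarith
  ultimately show ?thesis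
    by linarith
qed

text \<open>The hypothesis on \<open>\<theta>\<close> of \<open>prob_close_mass_gt_le\<close> for \<open>\<theta> = N powr (-B/8)\<close>, \<open>R = N powr (1 - \<kappa>')\<close>,
  \<open>T = \<tau> n\<close>, and \<open>K\<close> equal to \<open>N powr (B/4)\<close> times the bound on the expected numerator.\<close>
lemma close_mass_threshold_le:
  fixes \<gamma> \<kappa>' \<tau> A B :: real and k q n :: nat
  defines "A \<equiv> \<gamma>^2 / ln 2" and "B \<equiv> \<kappa>' * (2 - \<gamma>^2 / ln 2)"
    and "m \<equiv> n div k" and "m\<^sub>1 \<equiv> n div k - n div (k * q)"
  assumes k: "k \<ge> 1" and q: "q \<ge> 1" "A \<le> B * q / 4" and \<tau>: "\<gamma> * \<tau> \<le> ln 2 * B / 8"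
    and large: "36 * (real n + 1) \<le> 2 powr (B * n / 8)"
  shows "4 * ((2^n) powr (B / 4) * (4^n * 9 * (real m + 1) * exp (2 * \<gamma>^2 * k * m) * ((2^n) powr (1 - \<kappa>')) powr (2 - A)))
    \<le> (2^n) powr (- (B / 8)) * (exp (- \<gamma> * (\<tau> * n)) * (4^n * exp (\<gamma>^2 * k * m\<^sub>1 / 2)))^2"
proof -
  define E where "E = - (\<gamma> * \<tau> * n / ln 2) + 2 * real n + A * (real k * real m\<^sub>1) / 2"
  have \<gamma>: "\<gamma>^2 = A * ln 2" and A: "0 \<le> A" and B: "B = \<kappa>' * (2 - A)"
    unfolding A_def B_def by simp_all
  have "real m \<le> n"
    unfolding m_def by simp
  then have prefactor: "36 * (real m + 1) \<le> 2 powr (B * n / 8)"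
    by (intro order_trans[OF _ large]) simp
  have lhs: "4 * ((2^n) powr (B / 4) * (4^n * 9 * (real m + 1) * exp (2 * \<gamma>^2 * k * m) * ((2^n) powr (1 - \<kappa>')) powr (2 - A)))
      = 36 * (real m + 1) * 2 powr (B * n / 4 + 2 * real n + 2 * (A * (real k * real m)) + (1 - \<kappa>') * (2 - A) * n)"
    unfolding exp_eq_two_powr two_pow_powr four_pow_eq_two_powr powr_powr \<gamma>
    by (simp add: powr_add mult_ac)
  have "36 * (real m + 1) * 2 powr (B * n / 4 + 2 * real n + 2 * (A * (real k * real m)) + (1 - \<kappa>') * (2 - A) * n)
      \<le> 2 powr (B * n / 8) * 2 powr (B * n / 4 + 2 * real n + 2 * (A * (real k * real m)) + (1 - \<kappa>') * (2 - A) * n)"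
    using prefactor by (intro mult_right_mono) auto
  also have "\<dots> \<le> 2 powr (- (B * n / 8) + 2 * E)"
    unfolding powr_add[symmetric] E_def m_def m\<^sub>1_def
    using threshold_exponent_le[OF k A B q \<tau>] by (intro powr_mono) simp_all
  finally have le: "36 * (real m + 1) * 2 powr (B * n / 4 + 2 * real n + 2 * (A * (real k * real m)) + (1 - \<kappa>') * (2 - A) * n)
      \<le> 2 powr (- (B * n / 8) + 2 * E)" .
  have field: "exp (- \<gamma> * (\<tau> * n)) * (4^n * exp (\<gamma>^2 * k * m\<^sub>1 / 2)) = 2 powr E"
    unfolding E_def exp_eq_two_powr four_pow_eq_two_powr \<gamma> powr_add by (simp add: mult_ac)
  have threshold: "(2^n) powr (- (B / 8)) = (2::real) powr (- (B * n / 8))"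
    unfolding two_pow_powr by (simp add: mult_ac)
  have square: "(2 powr E)^2 = (2::real) powr (2 * E)"
    by (simp add: power2_eq_square flip: powr_add)
  show ?thesis
    using le by (simp only: lhs field threshold square powr_add)
qed

lemma exp_mult_two_pow_powr: "exp (\<gamma>^2 * j) * (2^j) powr (2 - \<gamma>^2 / ln 2) = (4::real)^j"
proof -
  have "\<gamma>^2 * j / ln 2 + j * (2 - \<gamma>^2 / ln 2) = 2 * j"
    by (simp add: algebra_simps)
  then show ?thesis
    unfolding exp_eq_two_powr two_pow_powr four_pow_eq_two_powr powr_add[symmetric] by simp
qed

lemma second_moment_term_le:
  fixes \<gamma> :: real and k q n :: nat
  defines "m\<^sub>1 \<equiv> n div k - n div (k * q)"
  assumes k: "k \<ge> 1" and q: "q \<ge> 1"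
  shows "36 * (real m\<^sub>1 + 1) * exp (\<gamma>^2 * k * m\<^sub>1) * (2^(m\<^sub>1*k)) powr (2 - \<gamma>^2 / ln 2) / 4^n
    \<le> 36 * (real n + 1) * 4^k * 4 powr (- (n / q))"
proof -
  define L where "L = n div (k * q)"
  have "L \<le> n div k"
    unfolding L_def using k q by (intro div_le_mono2) auto
  then have exponent: "real (m\<^sub>1 * k) - n \<le> k - n / q"
    using real_mult_div_le[of k n] real_div_less_mult_div_mult[OF k q, of n]
    unfolding m\<^sub>1_def L_def[symmetric] by (simp add: of_nat_diff algebra_simps)
  have "m\<^sub>1 \<le> n"
    unfolding m\<^sub>1_def by (meson diff_le_self div_le_dividend order_trans)
  have "exp (\<gamma>^2 * k * m\<^sub>1) * (2^(m\<^sub>1*k)) powr (2 - \<gamma>^2 / ln 2) / 4^n = 4^(m\<^sub>1 * k) / 4^n"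
    using exp_mult_two_pow_powr[of \<gamma> "m\<^sub>1 * k"] by (simp add: mult_ac)
  also have "\<dots> = 4 powr (real (m\<^sub>1 * k) - n)"
    by (simp only: powr_diff powr_realpow zero_less_numeral)
  also have "\<dots> \<le> 4 powr (k - n / q)"
    using exponent by (intro powr_mono) auto
  also have "\<dots> = 4^k * 4 powr (- (n / q))"
    by (simp add: powr_diff powr_minus_divide powr_realpow)
  finally have "36 * (real m\<^sub>1 + 1) * (exp (\<gamma>^2 * k * m\<^sub>1) * (2^(m\<^sub>1*k)) powr (2 - \<gamma>^2 / ln 2) / 4^n)
      \<le> 36 * (real n + 1) * (4^k * 4 powr (- (n / q)))"
    using \<open>m\<^sub>1 \<le> n\<close> by (intro mult_mono) auto
  then show ?thesis
    by (simp only: times_divide_eq_right mult.assoc)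
qed

lemma lower_tail_term_le:
  fixes \<tau> :: real and k q n :: nat
  assumes k: "k \<ge> 1" and q: "q \<ge> 1" "8 \<le> \<tau>^2 * q"
  shows "4^n * exp (k * (\<tau> * q)^2 * (n div (k * q)) / 2 - \<tau> * q * (\<tau> * n)) \<le> exp (- (2 * real n))"
proof -
  have "\<tau>^2 * q * (real (k * q) * (n div (k * q))) \<le> \<tau>^2 * q * n"
    by (intro mult_left_mono real_mult_div_le) simp
  moreover have "8 * real n \<le> \<tau>^2 * q * n"
    using q by (intro mult_right_mono) auto
  ultimately have "k * (\<tau> * q)^2 * (n div (k * q)) / 2 - \<tau> * q * (\<tau> * n) \<le> - (4 * real n)"
    by (simp add: power2_eq_square algebra_simps)
  moreover have "(4::real)^n \<le> exp (2 * real n)"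
  proof -
    have "(4::real)^n = exp (real n * (2 * ln 2))"
      unfolding exp_of_nat_mult by (simp add: exp_double)
    also have "\<dots> \<le> exp (2 * real n)"
      using ln_2_less_1 by (simp add: mult_left_le)
    finally show ?thesis .
  qed
  ultimately have "4^n * exp (k * (\<tau> * q)^2 * (n div (k * q)) / 2 - \<tau> * q * (\<tau> * n)) \<le> exp (2 * real n) * exp (- (4 * real n))"
    by (intro mult_mono) auto
  also have "\<dots> = exp (- (2 * real n))"
    by (simp flip: exp_add)
  finally show ?thesis .
qed

lemma two_pow_powr_le_two_pow_div_mult:
  fixes \<kappa> :: real
  assumes k: "k \<ge> 1" and large: "k \<le> \<kappa> * n"
  shows "((2::real)^n) powr (1 - \<kappa>) \<le> 2^(n div k * k)"
proof -
  have "n < k + k * (n div k)"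
    using k by (intro dividend_less_times_div) simp
  then have "real n < k + k * (n div k)"
    by (metis of_nat_add of_nat_less_iff of_nat_mult)
  moreover have "(1 - \<kappa>) * n = n - \<kappa> * n"
    by (simp add: algebra_simps)
  ultimately have "n * (1 - \<kappa>) \<le> real (n div k * k)"
    using large by (simp add: mult.commute)
  then have "((2::real)^n) powr (1 - \<kappa>) \<le> 2 powr real (n div k * k)"
    unfolding two_pow_powr by (intro powr_mono) auto
  also have "(2::real) powr real (n div k * k) = 2^(n div k * k)"
    by (rule powr_realpow) simp
  finally show ?thesis .
qed

lemma prob_close_mass_gt_powr_le:
  fixes \<gamma> \<kappa> \<kappa>' \<tau> A B :: real and k q n :: nat
  defines "A \<equiv> \<gamma>^2 / ln 2" and "B \<equiv> \<kappa>' * (2 - \<gamma>^2 / ln 2)"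
  assumes G: "gaussian_field M b" and k: "k \<ge> 1" and \<gamma>: "\<gamma> > 0" "\<gamma>^2 \<le> 2 * ln 2"
    and \<kappa>': "\<kappa>' \<le> 1" "\<kappa>' \<le> \<kappa>" and \<tau>: "\<tau> > 0" "\<gamma> * \<tau> \<le> ln 2 * B / 8"
    and q: "q \<ge> 1" "8 \<le> \<tau>^2 * q" "A \<le> B * q / 4"
    and large: "k \<le> \<kappa>' * n" "36 * (real n + 1) \<le> 2 powr (B * n / 8)"
  shows "measure M {\<omega>\<in>space M. close_mass k n \<gamma> \<kappa> b \<omega> > (2^n) powr (- (B / 8))}
    \<le> 2 powr (- (B * n / 4)) + 36 * (real n + 1) * 4^k * 4 powr (- (n / q)) + exp (- (2 * real n))"
proof -
  define m where "m = n div k"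
  define m\<^sub>1 where "m\<^sub>1 = n div k - n div (k * q)"
  define R where "R = ((2::real)^n) powr (1 - \<kappa>')"
  define X where "X = 4^n * 9 * (real m + 1) * exp (2 * \<gamma>^2 * k * m) * R powr (2 - A)"
  define K where "K = (2^n) powr (B / 4) * X"
  have R_ge: "R \<ge> 1"
    unfolding R_def using \<kappa>' by (intro ge_one_powr_ge_zero) auto
  have R_le: "R \<le> 2^(m*k)"
    unfolding R_def m_def using k large(1) by (rule two_pow_powr_le_two_pow_div_mult)
  have X: "X > 0"
    unfolding X_def R_def by simp
  have K: "K > 0"
    unfolding K_def using X by simp
  have "n div (k * q) \<le> n div k"
    using k q by (intro div_le_mono2) auto
  then have m\<^sub>1: "m\<^sub>1 \<le> m" "m - m\<^sub>1 = n div (k * q)"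
    unfolding m\<^sub>1_def m_def by auto
  have \<theta>: "4 * K \<le> (2^n) powr (- (B / 8)) * (exp (- \<gamma> * (\<tau> * n)) * (4^n * exp (\<gamma>^2 * k * m\<^sub>1 / 2)))^2"
    unfolding K_def X_def R_def m_def m\<^sub>1_def A_def B_def
    using close_mass_threshold_le[OF k q(1) q(3)[unfolded A_def B_def] \<tau>(2)[unfolded B_def] large(2)[unfolded B_def]] .
  have close: "close_pairs n \<kappa> \<subseteq> {(u, v). u \<in> VN n \<and> v \<in> VN n \<and> supdist u v < R}"
    unfolding R_def by (rule close_pairs_subset[OF \<kappa>'(2)])
  have "\<tau> * q > 0"
    using \<tau>(1) q(1) by simp
  note union_bound = prob_close_mass_gt_le[OF G k less_imp_le[OF \<gamma>(1)] \<gamma>(2) m\<^sub>1(1)[unfolded m_def]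
      R_ge R_le[unfolded m_def] close K this \<theta>[unfolded m_def]]
  have "X / K = 2 powr (- (B * n / 4))"
    unfolding K_def using X by (simp add: two_pow_powr powr_minus_divide mult_ac)
  then have "measure M {\<omega>\<in>space M. close_mass k n \<gamma> \<kappa> b \<omega> > (2^n) powr (- (B / 8))}
    \<le> 2 powr (- (B * n / 4))
      + 36 * (real m\<^sub>1 + 1) * exp (\<gamma>^2 * k * m\<^sub>1) * (2^(m\<^sub>1*k)) powr (2 - \<gamma>^2 / ln 2) / 4^n
      + 4^n * exp (k * (\<tau> * q)^2 * (n div (k * q)) / 2 - \<tau> * q * (\<tau> * n))"
    using union_bound unfolding X_def m_def[symmetric] A_def m\<^sub>1(2) by simp
  also note second_moment_term_le[OF k q(1), where \<gamma> = \<gamma> and n = n, folded m\<^sub>1_def]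
  also note lower_tail_term_le[OF k q(1) q(2), of n]
  finally show ?thesis
    by simp
qed

lemma close_mass_tail_tendsto_zero:
  fixes \<gamma> \<kappa> \<kappa>' \<tau> A B :: real and k q :: nat
  defines "A \<equiv> \<gamma>^2 / ln 2" and "B \<equiv> \<kappa>' * (2 - \<gamma>^2 / ln 2)"
  assumes G: "gaussian_field M b" and k: "k \<ge> 1" and \<gamma>: "\<gamma> > 0" "\<gamma>^2 < 2 * ln 2"
    and \<kappa>': "0 < \<kappa>'" "\<kappa>' \<le> 1" "\<kappa>' \<le> \<kappa>" and \<tau>: "\<tau> > 0" "\<gamma> * \<tau> \<le> ln 2 * B / 8"
    and q: "q \<ge> 1" "8 \<le> \<tau>^2 * q" "A \<le> B * q / 4"
  shows "(\<lambda>n. measure M {\<omega>\<in>space M. close_mass k n \<gamma> \<kappa> b \<omega> > (2^n) powr (- (B / 8))}) \<longlonglongrightarrow> 0"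
proof -
  have "\<gamma>^2 / ln 2 < 2"
    using \<gamma>(2) by (simp add: field_simps)
  then have B: "B > 0"
    unfolding B_def using \<kappa>'(1) by simp
  have "eventually (\<lambda>n. real k \<le> \<kappa>' * n) sequentially"
    using \<kappa>'(1) by real_asymp
  moreover have "eventually (\<lambda>n. 36 * (real n + 1) \<le> 2 powr (B * n / 8)) sequentially"
    using B by real_asymp
  ultimately have bound: "eventually (\<lambda>n. measure M {\<omega>\<in>space M. close_mass k n \<gamma> \<kappa> b \<omega> > (2^n) powr (- (B / 8))}
      \<le> 2 powr (- (B * n / 4)) + 36 * (real n + 1) * 4^k * 4 powr (- (n / q)) + exp (- (2 * real n))) sequentially"
  proof eventually_elim
    case (elim n)
    show ?case
      unfolding B_def
      by (rule prob_close_mass_gt_powr_le[OF G k \<gamma>(1) less_imp_le[OF \<gamma>(2)] \<kappa>'(2,3) \<tau>(1)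
            \<tau>(2)[unfolded B_def] q(1,2) q(3)[unfolded A_def B_def] elim[unfolded B_def]])
  qed
  have limit: "(\<lambda>n. 2 powr (- (B * n / 4)) + 36 * (real n + 1) * 4^k * 4 powr (- (n / q)) + exp (- (2 * real n))) \<longlonglongrightarrow> 0"
  proof -
    have "real q > 0"
      using q(1) by simp
    then have second: "(\<lambda>n. 36 * (real n + 1) * 4^k * 4 powr (- (n / q))) \<longlonglongrightarrow> 0"
      by real_asymp
    have first: "(\<lambda>n. 2 powr (- (B * n / 4))) \<longlonglongrightarrow> 0"
      using B by real_asymp
    have third: "(\<lambda>n. exp (- (2 * real n))) \<longlonglongrightarrow> 0"
      by real_asymp
    show ?thesis
      using tendsto_add[OF tendsto_add[OF first second] third] by simp
  qed
  have "eventually (\<lambda>n. 0 \<le> measure M {\<omega>\<in>space M. close_mass k n \<gamma> \<kappa> b \<omega> > (2^n) powr (- (B / 8))}) sequentially"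
    by (intro always_eventually allI measure_nonneg)
  then show ?thesis
    using bound tendsto_const limit by (rule tendsto_sandwich)
qed

lemma exists_nat_ge_ratios:
  fixes \<tau> A B :: real
  assumes "\<tau> > 0" "A > 0" "B > 0"
  shows "\<exists>q::nat. q \<ge> (1::nat) \<and> 8 \<le> \<tau>^2 * q \<and> A \<le> B * q / 4"
proof -
  obtain q :: nat where "1 + 8 / \<tau>^2 + 4 * A / B \<le> q"
    using real_arch_simple by blast
  moreover have "0 < 8 / \<tau>^2" "0 < 4 * A / B"
    using assms by simp_all
  ultimately have "1 \<le> real q" "8 / \<tau>^2 \<le> q" "4 * A / B \<le> q"
    by linarith+
  then have "q \<ge> 1" "8 \<le> \<tau>^2 * q" "A \<le> B * q / 4"
    using assms by (simp_all add: field_simps)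
  then show ?thesis
    by blast
qed

theorem proposition3p1:
  fixes k :: nat and \<gamma> \<kappa> :: real
  assumes "k \<ge> 1" and "0 < \<gamma>" and "\<gamma> < sqrt (2 * ln 2)" and "\<kappa> > 0"
  shows "\<exists>\<rho>>0. \<forall>(M :: 'a measure) b. gaussian_field M b \<longrightarrow>
           (\<lambda>n. measure M {\<omega> \<in> space M. close_mass k n \<gamma> \<kappa> b \<omega> > (2 ^ n) powr (- \<rho>)})
             \<longlonglongrightarrow> 0"
proof -
  define \<kappa>' where "\<kappa>' = min \<kappa> 1"
  define A where "A = \<gamma>^2 / ln 2"
  define B where "B = \<kappa>' * (2 - \<gamma>^2 / ln 2)"
  define \<tau> where "\<tau> = ln 2 * B / (8 * \<gamma>)"
  have "\<gamma>^2 < (sqrt (2 * ln 2))^2"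
    using assms(2,3) by (intro power_strict_mono) auto
  then have \<gamma>: "\<gamma>^2 < 2 * ln 2"
    by simp
  have \<kappa>': "0 < \<kappa>'" "\<kappa>' \<le> 1" "\<kappa>' \<le> \<kappa>"
    unfolding \<kappa>'_def using assms(4) by auto
  have B: "B > 0" and A: "A > 0"
    using \<gamma> \<kappa>' assms(2) unfolding A_def B_def by (simp_all add: field_simps)
  have \<tau>: "\<tau> > 0" "\<gamma> * \<tau> \<le> ln 2 * B / 8"
    unfolding \<tau>_def using B assms(2) by simp_all
  obtain q :: nat where q: "q \<ge> 1" "8 \<le> \<tau>^2 * q" "A \<le> B * q / 4"
    using exists_nat_ge_ratios[OF \<tau>(1) A B] by blast
  show ?thesis
    using close_mass_tail_tendsto_zero[OF _ assms(1,2) \<gamma> \<kappa>' \<tau>[unfolded B_def] q[unfolded A_def B_def]] B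
    by (intro exI[of _ "B / 8"]) (auto simp: B_def)
qed

end
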